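(* Let $R$ be a local ring and $s\in R$ a central element with $s\in J(R)$. For $A\in M_2(R;s)$, we have $A^n\in J\big(M_2(R;s)\big)$ for some positive integer $n$ if and only if $A\in J\big(M_2(R;s)\big)$.
   Context: All rings are associative with identity. A ring $R$ is local if $R/J(R)$ is a division ring, where $J(R)$ is the Jacobson radical. For a ring $R$ and a central element $s\in R$, $M_2(R;s)$ denotes the ring whose elements are the $2\times 2$ arrays $\left[\begin{smallmatrix} a&b\\ c&d\end{smallmatrix}\right]$ with $a,b,c,d\in R$, with componentwise addition and multiplication $\left[\begin{smallmatrix} a&b\\ c&d\end{smallmatrix}\right]\left[\begin{smallmatrix} a'&b'\\ c'&d'\end{smallmatrix}\right]=\left[\begin{smallmatrix} aa'+s^2bc'&ab'+bd'\\ ca'+dc'&s^2cb'+dd'\end{smallmatrix}\right]$. $J\big(M_2(R;s)\big)$ denotes the Jacobson radical of this ring. *)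

theory Defs
  imports "HOL-Algebra.Algebra"
begin

definition left_ideal :: "'a set \<Rightarrow> ('a, 'b) ring_scheme \<Rightarrow> bool" where
  "left_ideal I R \<longleftrightarrow> additive_subgroup I R \<and>
     (\<forall>r \<in> carrier R. \<forall>x \<in> I. r \<otimes>\<^bsub>R\<^esub> x \<in> I)"

definition maximal_left_ideal :: "'a set \<Rightarrow> ('a, 'b) ring_scheme \<Rightarrow> bool" where
  "maximal_left_ideal I R \<longleftrightarrow> left_ideal I R \<and> I \<noteq> carrier R \<and>
     (\<forall>K. left_ideal K R \<and> I \<subseteq> K \<longrightarrow> K = I \<or> K = carrier R)"

definition jacobson :: "('a, 'b) ring_scheme \<Rightarrow> 'a set" where
  "jacobson R = carrier R \<inter> \<Inter> {I. maximal_left_ideal I R}"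

definition division_ring :: "('a, 'b) ring_scheme \<Rightarrow> bool" where
  "division_ring R \<longleftrightarrow> ring R \<and> \<one>\<^bsub>R\<^esub> \<noteq> \<zero>\<^bsub>R\<^esub> \<and>
     (\<forall>x \<in> carrier R - {\<zero>\<^bsub>R\<^esub>}. x \<in> Units R)"

definition local_ring :: "('a, 'b) ring_scheme \<Rightarrow> bool" where
  "local_ring R \<longleftrightarrow> ring R \<and> division_ring (R Quot jacobson R)"

definition central :: "('a, 'b) ring_scheme \<Rightarrow> 'a \<Rightarrow> bool" where
  "central R s \<longleftrightarrow> s \<in> carrier R \<and> (\<forall>x \<in> carrier R. s \<otimes>\<^bsub>R\<^esub> x = x \<otimes>\<^bsub>R\<^esub> s)"

text \<open>The ring M_2(R;s); the array [a b; c d] is represented as (a,b,c,d).\<close>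
definition e11 :: "'a * 'a * 'a * 'a \<Rightarrow> 'a" where "e11 P = fst P"
definition e12 :: "'a * 'a * 'a * 'a \<Rightarrow> 'a" where "e12 P = fst (snd P)"
definition e21 :: "'a * 'a * 'a * 'a \<Rightarrow> 'a" where "e21 P = fst (snd (snd P))"
definition e22 :: "'a * 'a * 'a * 'a \<Rightarrow> 'a" where "e22 P = snd (snd (snd P))"

definition M2_mult :: "('a, 'b) ring_scheme \<Rightarrow> 'a \<Rightarrow> 'a * 'a * 'a * 'a \<Rightarrow> 'a * 'a * 'a * 'a \<Rightarrow> 'a * 'a * 'a * 'a" where
  "M2_mult R s P Q =
        (e11 P \<otimes>\<^bsub>R\<^esub> e11 Q \<oplus>\<^bsub>R\<^esub> (s [^]\<^bsub>R\<^esub> (2::nat)) \<otimes>\<^bsub>R\<^esub> e12 P \<otimes>\<^bsub>R\<^esub> e21 Q,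
         e11 P \<otimes>\<^bsub>R\<^esub> e12 Q \<oplus>\<^bsub>R\<^esub> e12 P \<otimes>\<^bsub>R\<^esub> e22 Q,
         e21 P \<otimes>\<^bsub>R\<^esub> e11 Q \<oplus>\<^bsub>R\<^esub> e22 P \<otimes>\<^bsub>R\<^esub> e21 Q,
         (s [^]\<^bsub>R\<^esub> (2::nat)) \<otimes>\<^bsub>R\<^esub> e21 P \<otimes>\<^bsub>R\<^esub> e12 Q \<oplus>\<^bsub>R\<^esub> e22 P \<otimes>\<^bsub>R\<^esub> e22 Q)"

definition M2_add :: "('a, 'b) ring_scheme \<Rightarrow> 'a * 'a * 'a * 'a \<Rightarrow> 'a * 'a * 'a * 'a \<Rightarrow> 'a * 'a * 'a * 'a" where
  "M2_add R P Q = (e11 P \<oplus>\<^bsub>R\<^esub> e11 Q, e12 P \<oplus>\<^bsub>R\<^esub> e12 Q,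
                   e21 P \<oplus>\<^bsub>R\<^esub> e21 Q, e22 P \<oplus>\<^bsub>R\<^esub> e22 Q)"

definition M2 :: "('a, 'b) ring_scheme \<Rightarrow> 'a \<Rightarrow> ('a * 'a * 'a * 'a) ring" where
  "M2 R s = \<lparr>carrier = carrier R \<times> carrier R \<times> carrier R \<times> carrier R,
     monoid.mult = M2_mult R s,
     one = (\<one>\<^bsub>R\<^esub>, \<zero>\<^bsub>R\<^esub>, \<zero>\<^bsub>R\<^esub>, \<one>\<^bsub>R\<^esub>),
     ring.zero = (\<zero>\<^bsub>R\<^esub>, \<zero>\<^bsub>R\<^esub>, \<zero>\<^bsub>R\<^esub>, \<zero>\<^bsub>R\<^esub>),
     ring.add = M2_add R\<rparr>"

end

theory Submission
  imports Defs
begin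

text \<open>The Jacobson radical of any ring is the set of its left quasi-regular elements \<open>x\<close>,
  i.e. those for which \<open>\<one> - r x\<close> is left invertible for every \<open>r\<close>. Over a local ring \<open>R\<close>
  with \<open>s \<in> J(R)\<close>, a matrix of \<open>M\<^sub>2(R;s)\<close> whose diagonal entries lie outside \<open>J(R)\<close> is left
  invertible (row operations reduce it to a diagonal matrix with entries in \<open>\<one> + s\<^sup>2R\<close>), while
  a matrix with a zero column is not. Hence \<open>J(M\<^sub>2(R;s))\<close> consists of the matrices with both
  diagonal entries in \<open>J(R)\<close>. Modulo \<open>J(R)\<close>, the diagonal entries of a product are the products
  of the diagonal entries, because the off-diagonal contributions carry the factor \<open>s\<^sup>2\<close>; and in a
  local ring \<open>J(R)\<close> is the set of non-left-invertible elements, so a diagonal entry of \<open>A\<^sup>n\<close>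
  lies in \<open>J(R)\<close> exactly when the corresponding entry of \<open>A\<close> does.\<close>

definition left_invertible :: "('a, 'b) monoid_scheme \<Rightarrow> 'a \<Rightarrow> bool" where
  "left_invertible R x \<longleftrightarrow> (\<exists>y \<in> carrier R. y \<otimes>\<^bsub>R\<^esub> x = \<one>\<^bsub>R\<^esub>)"

lemma left_ideal_subset: "left_ideal I R \<Longrightarrow> I \<subseteq> carrier R"
  by (simp add: left_ideal_def additive_subgroup.a_subset)

lemma left_ideal_zero: "left_ideal I R \<Longrightarrow> \<zero>\<^bsub>R\<^esub> \<in> I"
  by (simp add: left_ideal_def additive_subgroup.zero_closed)

lemma left_ideal_add: "left_ideal I R \<Longrightarrow> x \<in> I \<Longrightarrow> y \<in> I \<Longrightarrow> x \<oplus>\<^bsub>R\<^esub> y \<in> I"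
  by (simp add: left_ideal_def additive_subgroup.a_closed)

lemma left_ideal_neg: "left_ideal I R \<Longrightarrow> x \<in> I \<Longrightarrow> \<ominus>\<^bsub>R\<^esub> x \<in> I"
  by (simp add: left_ideal_def additive_subgroup.a_inv_closed)

lemma left_ideal_mult: "left_ideal I R \<Longrightarrow> r \<in> carrier R \<Longrightarrow> x \<in> I \<Longrightarrow> r \<otimes>\<^bsub>R\<^esub> x \<in> I"
  by (simp add: left_ideal_def)

lemma maximal_left_ideal_left_ideal: "maximal_left_ideal I R \<Longrightarrow> left_ideal I R"
  by (simp add: maximal_left_ideal_def)

context ring begin

lemma left_idealI:
  assumes "I \<subseteq> carrier R" "\<zero> \<in> I" "\<And>x y. x \<in> I \<Longrightarrow> y \<in> I \<Longrightarrow> x \<oplus> y \<in> I"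
    and "\<And>r x. r \<in> carrier R \<Longrightarrow> x \<in> I \<Longrightarrow> r \<otimes> x \<in> I"
  shows "left_ideal I R"
  unfolding left_ideal_def
proof (intro conjI ballI additive_subgroupI add.subgroupI)
  fix x assume "x \<in> I"
  with assms(1) assms(4)[of "\<ominus> \<one>" x] show "\<ominus> x \<in> I"
    by (auto simp: l_minus)
qed (use assms in auto)

lemma left_ideal_eq_carrier:
  assumes "left_ideal I R" "\<one> \<in> I"
  shows "I = carrier R"
proof
  show "I \<subseteq> carrier R" using left_ideal_subset[OF assms(1)] .
  show "carrier R \<subseteq> I"
  proof
    fix r assume "r \<in> carrier R"
    with left_ideal_mult[OF assms(1) this assms(2)] show "r \<in> I" by simp
  qed
qed

lemma left_ideal_sum:
  assumes "left_ideal I R" "left_ideal K R"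
  shows "left_ideal {i \<oplus> k | i k. i \<in> I \<and> k \<in> K} R"
proof (rule left_idealI)
  note I = left_ideal_subset[OF assms(1)] and K = left_ideal_subset[OF assms(2)]
  show "{i \<oplus> k | i k. i \<in> I \<and> k \<in> K} \<subseteq> carrier R"
    using I K by (auto intro!: a_closed)
  show "\<zero> \<in> {i \<oplus> k | i k. i \<in> I \<and> k \<in> K}"
    using left_ideal_zero[OF assms(1)] left_ideal_zero[OF assms(2)] r_zero[OF zero_closed, symmetric]
    by blast
next
  fix x y assume "x \<in> {i \<oplus> k | i k. i \<in> I \<and> k \<in> K}" "y \<in> {i \<oplus> k | i k. i \<in> I \<and> k \<in> K}"
  then obtain i k i' k' where "x = i \<oplus> k" "y = i' \<oplus> k'" "i \<in> I" "k \<in> K" "i' \<in> I" "k' \<in> K"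
    by blast
  moreover from this have "x \<oplus> y = (i \<oplus> i') \<oplus> (k \<oplus> k')"
    using left_ideal_subset[OF assms(1)] left_ideal_subset[OF assms(2)] by (simp add: subset_iff a_ac)
  ultimately show "x \<oplus> y \<in> {i \<oplus> k | i k. i \<in> I \<and> k \<in> K}"
    using left_ideal_add[OF assms(1)] left_ideal_add[OF assms(2)] by blast
next
  fix r x assume r: "r \<in> carrier R" and "x \<in> {i \<oplus> k | i k. i \<in> I \<and> k \<in> K}"
  then obtain i k where "x = i \<oplus> k" "i \<in> I" "k \<in> K" by blast
  moreover from this have "r \<otimes> x = r \<otimes> i \<oplus> r \<otimes> k"
    using r left_ideal_subset[OF assms(1)] left_ideal_subset[OF assms(2)] by (simp add: subset_iff r_distr)
  ultimately show "r \<otimes> x \<in> {i \<oplus> k | i k. i \<in> I \<and> k \<in> K}"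
    using left_ideal_mult[OF assms(1) r] left_ideal_mult[OF assms(2) r] by blast
qed

lemma left_ideal_principal:
  assumes "x \<in> carrier R"
  shows "left_ideal {r \<otimes> x | r. r \<in> carrier R} R"
proof (rule left_idealI)
  fix a b assume "a \<in> {r \<otimes> x | r. r \<in> carrier R}" "b \<in> {r \<otimes> x | r. r \<in> carrier R}"
  then obtain r r' where "a = r \<otimes> x" "b = r' \<otimes> x" "r \<in> carrier R" "r' \<in> carrier R" by blast
  with assms show "a \<oplus> b \<in> {r \<otimes> x | r. r \<in> carrier R}"
    by (auto intro!: exI[of _ "r \<oplus> r'"] simp: l_distr)
next
  fix r a assume r: "r \<in> carrier R" and "a \<in> {r \<otimes> x | r. r \<in> carrier R}"
  then obtain r' where "a = r' \<otimes> x" "r' \<in> carrier R" by blast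
  with assms r show "r \<otimes> a \<in> {r \<otimes> x | r. r \<in> carrier R}"
    by (auto intro!: exI[of _ "r \<otimes> r'"] simp: m_assoc)
next
  show "\<zero> \<in> {r \<otimes> x | r. r \<in> carrier R}" using assms l_null[OF assms, symmetric] by blast
qed (use assms in blast)

lemma left_ideal_Union_chain:
  assumes "\<C> \<noteq> {}" and ideal: "\<And>I. I \<in> \<C> \<Longrightarrow> left_ideal I R"
    and chain: "\<And>I K. I \<in> \<C> \<Longrightarrow> K \<in> \<C> \<Longrightarrow> I \<subseteq> K \<or> K \<subseteq> I"
  shows "left_ideal (\<Union>\<C>) R"
proof (rule left_idealI)
  show "\<Union>\<C> \<subseteq> carrier R" using left_ideal_subset[OF ideal] by blast
  obtain I where "I \<in> \<C>" using assms(1) by blast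
  with left_ideal_zero[OF ideal] show "\<zero> \<in> \<Union>\<C>" by blast
next
  fix x y assume "x \<in> \<Union>\<C>" "y \<in> \<Union>\<C>"
  then obtain I K where IK: "I \<in> \<C>" "K \<in> \<C>" "x \<in> I" "y \<in> K" by blast
  show "x \<oplus> y \<in> \<Union>\<C>"
  proof (cases "I \<subseteq> K")
    case True
    with IK left_ideal_add[OF ideal[OF IK(2)], of x y] show ?thesis by blast
  next
    case False
    with chain[OF IK(1,2)] IK left_ideal_add[OF ideal[OF IK(1)], of x y] show ?thesis by blast
  qed
next
  fix r x assume "r \<in> carrier R" "x \<in> \<Union>\<C>"
  then show "r \<otimes> x \<in> \<Union>\<C>" using left_ideal_mult[OF ideal] by blast
qed

text \<open>Krull's lemma for left ideals: the left ideals containing \<open>x\<close> but not \<open>\<one>\<close>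
  form a nonempty inductive family.\<close>
lemma exists_maximal_left_ideal:
  assumes x: "x \<in> carrier R" and not_inv: "\<not> left_invertible R x"
  obtains I where "maximal_left_ideal I R" "x \<in> I"
proof -
  define \<F> where "\<F> = {I. left_ideal I R \<and> x \<in> I \<and> \<one> \<notin> I}"
  have principal: "{r \<otimes> x | r. r \<in> carrier R} \<in> \<F>"
  proof -
    have "x \<in> {r \<otimes> x | r. r \<in> carrier R}" using x l_one[OF x, symmetric] by blast
    moreover have "\<one> \<notin> {r \<otimes> x | r. r \<in> carrier R}" using not_inv by (auto simp: left_invertible_def)
    ultimately show ?thesis using left_ideal_principal[OF x] by (simp add: \<F>_def)
  qed
  have "\<forall>\<C> \<in> chains \<F>. \<exists>U \<in> \<F>. \<forall>I \<in> \<C>. I \<subseteq> U"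
  proof
    fix \<C> assume \<C>: "\<C> \<in> chains \<F>"
    show "\<exists>U \<in> \<F>. \<forall>I \<in> \<C>. I \<subseteq> U"
    proof (cases "\<C> = {}")
      case True
      with principal show ?thesis by blast
    next
      case False
      have sub: "\<C> \<subseteq> \<F>" and chain: "\<And>I K. I \<in> \<C> \<Longrightarrow> K \<in> \<C> \<Longrightarrow> I \<subseteq> K \<or> K \<subseteq> I"
        using chainsD2[OF \<C>] chainsD[OF \<C>] by blast+
      have "left_ideal (\<Union>\<C>) R"
        using left_ideal_Union_chain[OF False _ chain] sub by (auto simp: \<F>_def)
      moreover have "x \<in> \<Union>\<C>" "\<one> \<notin> \<Union>\<C>" using False sub by (auto simp: \<F>_def)
      ultimately have "\<Union>\<C> \<in> \<F>" by (simp add: \<F>_def)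
      then show ?thesis by (intro bexI[of _ "\<Union>\<C>"]) auto
    qed
  qed
  then obtain I where I: "I \<in> \<F>" "\<forall>K \<in> \<F>. I \<subseteq> K \<longrightarrow> K = I"
    using Zorn_Lemma2[of \<F>] by blast
  have "maximal_left_ideal I R"
    unfolding maximal_left_ideal_def
  proof (intro conjI allI impI)
    show "left_ideal I R" "I \<noteq> carrier R" using I(1) by (auto simp: \<F>_def)
  next
    fix K assume K: "left_ideal K R \<and> I \<subseteq> K"
    show "K = I \<or> K = carrier R"
    proof (cases "\<one> \<in> K")
      case True
      then show ?thesis using left_ideal_eq_carrier K by blast
    next
      case False
      with K I(1) have "K \<in> \<F>" by (auto simp: \<F>_def)
      with I(2) K show ?thesis by blast
    qed
  qed
  with I(1) show thesis using that by (simp add: \<F>_def)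
qed

lemma left_invertible_factor:
  assumes "x \<in> carrier R" "y \<in> carrier R" "left_invertible R (y \<otimes> x)"
  shows "left_invertible R x"
proof -
  obtain z where "z \<in> carrier R" "z \<otimes> (y \<otimes> x) = \<one>"
    using assms(3) by (auto simp: left_invertible_def)
  with assms(1,2) show ?thesis
    by (auto simp: left_invertible_def m_assoc[symmetric] intro!: bexI[of _ "z \<otimes> y"])
qed

lemma jacobson_subset: "jacobson R \<subseteq> carrier R"
  by (auto simp: jacobson_def)

lemma jacobson_left_ideal: "left_ideal (jacobson R) R"
proof (rule left_idealI)
  show "\<zero> \<in> jacobson R"
    using left_ideal_zero[OF maximal_left_ideal_left_ideal] by (auto simp: jacobson_def)
  show "x \<oplus> y \<in> jacobson R" if "x \<in> jacobson R" "y \<in> jacobson R" for x y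
    using that by (auto simp: jacobson_def intro: left_ideal_add[OF maximal_left_ideal_left_ideal])
  show "r \<otimes> x \<in> jacobson R" if "r \<in> carrier R" "x \<in> jacobson R" for r x
    using that by (auto simp: jacobson_def intro: left_ideal_mult[OF maximal_left_ideal_left_ideal])
qed (rule jacobson_subset)

lemma jacobson_add_iff:
  assumes "u \<in> carrier R" "j \<in> jacobson R"
  shows "u \<oplus> j \<in> jacobson R \<longleftrightarrow> u \<in> jacobson R"
proof
  assume uj: "u \<oplus> j \<in> jacobson R"
  have "u = (u \<oplus> j) \<oplus> \<ominus> j"
    using assms jacobson_subset by (auto simp: a_assoc r_neg)
  also have "\<dots> \<in> jacobson R"
    using left_ideal_add[OF jacobson_left_ideal uj left_ideal_neg[OF jacobson_left_ideal assms(2)]] .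
  finally show "u \<in> jacobson R" .
qed (rule left_ideal_add[OF jacobson_left_ideal _ assms(2)])

lemma jacobson_iff_left_quasi_regular:
  "x \<in> jacobson R \<longleftrightarrow> x \<in> carrier R \<and> (\<forall>r \<in> carrier R. left_invertible R (\<one> \<ominus> r \<otimes> x))"
proof (intro iffI conjI ballI; (elim conjE)?)
  assume x: "x \<in> jacobson R"
  then show xc: "x \<in> carrier R" using jacobson_subset by blast
  fix r assume r: "r \<in> carrier R"
  show "left_invertible R (\<one> \<ominus> r \<otimes> x)"
  proof (rule ccontr)
    assume "\<not> left_invertible R (\<one> \<ominus> r \<otimes> x)"
    then obtain I where I: "maximal_left_ideal I R" "\<one> \<ominus> r \<otimes> x \<in> I"
      using exists_maximal_left_ideal r xc by blast
    have "r \<otimes> x \<in> I"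
      using left_ideal_mult[OF jacobson_left_ideal r x] I(1) by (auto simp: jacobson_def)
    with I have "(\<one> \<ominus> r \<otimes> x) \<oplus> r \<otimes> x \<in> I"
      using left_ideal_add[OF maximal_left_ideal_left_ideal[OF I(1)]] by blast
    moreover have "(\<one> \<ominus> r \<otimes> x) \<oplus> r \<otimes> x = \<one>"
      using r xc by (simp add: minus_eq a_assoc l_neg)
    ultimately have "I = carrier R"
      using left_ideal_eq_carrier[OF maximal_left_ideal_left_ideal[OF I(1)]] by simp
    with I(1) show False by (simp add: maximal_left_ideal_def)
  qed
next
  assume xc: "x \<in> carrier R" and qr: "\<forall>r \<in> carrier R. left_invertible R (\<one> \<ominus> r \<otimes> x)"
  have "x \<in> I" if I: "maximal_left_ideal I R" for I
  proof (rule ccontr)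
    assume xI: "x \<notin> I"
    note I_ideal = maximal_left_ideal_left_ideal[OF I]
    define K where "K = {i \<oplus> k | i k. i \<in> I \<and> k \<in> {r \<otimes> x | r. r \<in> carrier R}}"
    have K_ideal: "left_ideal K R"
      unfolding K_def by (rule left_ideal_sum[OF I_ideal left_ideal_principal[OF xc]])
    have "I \<subseteq> K"
    proof
      fix i assume "i \<in> I"
      moreover have "i = i \<oplus> \<zero> \<otimes> x" using \<open>i \<in> I\<close> left_ideal_subset[OF I_ideal] xc by auto
      ultimately show "i \<in> K" unfolding K_def by blast
    qed
    moreover have "x \<in> K"
    proof -
      have "x = \<zero> \<oplus> \<one> \<otimes> x" using xc by simp
      then show ?thesis unfolding K_def using left_ideal_zero[OF I_ideal] by blast
    qed
    ultimately have "K = carrier R"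
      using I K_ideal xI unfolding maximal_left_ideal_def by auto
    then obtain i r where ir: "i \<in> I" "r \<in> carrier R" "\<one> = i \<oplus> r \<otimes> x"
      unfolding K_def using one_closed by blast
    have "i = \<one> \<ominus> r \<otimes> x"
      using ir left_ideal_subset[OF I_ideal] xc by (auto simp: minus_eq add.inv_solve_right)
    then obtain y where y: "y \<in> carrier R" "y \<otimes> i = \<one>"
      using qr ir(2) by (auto simp: left_invertible_def)
    then have "\<one> \<in> I" using left_ideal_mult[OF I_ideal y(1) ir(1)] by simp
    then show False using I left_ideal_eq_carrier[OF I_ideal] by (simp add: maximal_left_ideal_def)
  qed
  with xc show "x \<in> jacobson R" by (simp add: jacobson_def)
qed

lemma left_invertible_one_minus_jacobson:
  assumes "j \<in> jacobson R"
  shows "left_invertible R (\<one> \<ominus> j)"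
proof -
  have "j \<in> carrier R" using assms jacobson_subset by blast
  with assms jacobson_iff_left_quasi_regular[of j]
  have "left_invertible R (\<one> \<ominus> \<one> \<otimes> j)" by blast
  with \<open>j \<in> carrier R\<close> show ?thesis by simp
qed

end

locale ring_local = ring + assumes local: "local_ring R"
begin

abbreviation J :: "'a set" where "J \<equiv> jacobson R"

lemma jacobson_abelian_subgroup: "abelian_subgroup J R"
  using jacobson_left_ideal abelian_group_axioms
  by (intro abelian_subgroupI3) (simp_all add: left_ideal_def)

lemma one_notin_jacobson: "\<one> \<notin> J"
proof
  assume "\<one> \<in> J"
  then have "J +> \<one> = J" by (rule abelian_subgroup.a_rcos_const[OF jacobson_abelian_subgroup])
  with local show False by (simp add: local_ring_def division_ring_def FactRing_def)
qed

lemma left_invertible_if_notin_jacobson: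
  assumes x: "x \<in> carrier R" and xJ: "x \<notin> J"
  shows "left_invertible R x"
proof -
  interpret J: abelian_subgroup J R by (rule jacobson_abelian_subgroup)
  have "J +> x \<noteq> J" using J.a_rcos_self[OF x] xJ by auto
  moreover have "J +> x \<in> carrier (R Quot J)"
    using a_rcosetsI[OF jacobson_subset x] by (simp add: FactRing_def)
  ultimately have "J +> x \<in> Units (R Quot J)"
    using local by (simp add: local_ring_def division_ring_def FactRing_def)
  then obtain Y where Y: "Y \<in> a_rcosets J" "[mod J:] Y \<Otimes> (J +> x) = J +> \<one>"
    by (auto simp: Units_def FactRing_def)
  then obtain y where y: "y \<in> carrier R" "Y = J +> y" by (auto simp: A_RCOSETS_def')
  have "y \<otimes> x \<in> [mod J:] Y \<Otimes> (J +> x)"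
    unfolding rcoset_mult_def y(2)
    using J.a_rcos_self[OF y(1)] J.a_rcos_self[OF x] J.a_rcos_self[OF m_closed[OF y(1) x]] by blast
  then have "J +> \<one> = J +> (y \<otimes> x)"
    using Y(2) by (intro J.a_repr_independence') simp_all
  then have "\<one> \<in> J +> (y \<otimes> x)" using J.a_rcos_self[OF one_closed] by simp
  then have "\<one> \<ominus> y \<otimes> x \<in> J"
    using J.a_rcos_module_minus[OF ring_axioms m_closed[OF y(1) x] one_closed] by blast
  then have "left_invertible R (\<one> \<ominus> (\<one> \<ominus> y \<otimes> x))"
    by (rule left_invertible_one_minus_jacobson)
  moreover have "\<one> \<ominus> (\<one> \<ominus> y \<otimes> x) = y \<otimes> x"
    using x y(1) by (simp add: minus_eq minus_add r_neg2)
  ultimately show ?thesis using left_invertible_factor[OF x y(1)] by simp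
qed

lemma mult_jacobson_iff:
  assumes "x \<in> carrier R" "y \<in> carrier R" "x \<in> J \<longleftrightarrow> y \<in> J"
  shows "x \<otimes> y \<in> J \<longleftrightarrow> y \<in> J"
proof
  assume xy: "x \<otimes> y \<in> J"
  show "y \<in> J"
  proof (rule ccontr)
    assume "y \<notin> J"
    with assms obtain x' where x': "x' \<in> carrier R" "x' \<otimes> x = \<one>"
      using left_invertible_if_notin_jacobson by (auto simp: left_invertible_def)
    then have "x' \<otimes> (x \<otimes> y) = y" using assms(1,2) by (simp add: m_assoc[symmetric])
    with left_ideal_mult[OF jacobson_left_ideal x'(1) xy] \<open>y \<notin> J\<close> show False by simp
  qed
qed (rule left_ideal_mult[OF jacobson_left_ideal assms(1)])

lemma one_neq_zero: "\<one> \<noteq> \<zero>"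
  using one_notin_jacobson left_ideal_zero[OF jacobson_left_ideal] by metis

lemma one_minus_notin_jacobson: "j \<in> J \<Longrightarrow> \<one> \<ominus> j \<notin> J"
  using jacobson_add_iff[of \<one> "\<ominus> j"] left_ideal_neg[OF jacobson_left_ideal] one_notin_jacobson
  by (simp add: minus_eq)

end

lemma M2_entries [simp]:
  "e11 (a, b, c, d) = a" "e12 (a, b, c, d) = b" "e21 (a, b, c, d) = c" "e22 (a, b, c, d) = d"
  by (simp_all add: e11_def e12_def e21_def e22_def)

lemma M2_simps [simp]:
  "carrier (M2 R s) = carrier R \<times> carrier R \<times> carrier R \<times> carrier R"
  "(a, b, c, d) \<otimes>\<^bsub>M2 R s\<^esub> (a', b', c', d') =
     (a \<otimes>\<^bsub>R\<^esub> a' \<oplus>\<^bsub>R\<^esub> s [^]\<^bsub>R\<^esub> (2::nat) \<otimes>\<^bsub>R\<^esub> b \<otimes>\<^bsub>R\<^esub> c',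
      a \<otimes>\<^bsub>R\<^esub> b' \<oplus>\<^bsub>R\<^esub> b \<otimes>\<^bsub>R\<^esub> d',
      c \<otimes>\<^bsub>R\<^esub> a' \<oplus>\<^bsub>R\<^esub> d \<otimes>\<^bsub>R\<^esub> c',
      s [^]\<^bsub>R\<^esub> (2::nat) \<otimes>\<^bsub>R\<^esub> c \<otimes>\<^bsub>R\<^esub> b' \<oplus>\<^bsub>R\<^esub> d \<otimes>\<^bsub>R\<^esub> d')"
  "\<one>\<^bsub>M2 R s\<^esub> = (\<one>\<^bsub>R\<^esub>, \<zero>\<^bsub>R\<^esub>, \<zero>\<^bsub>R\<^esub>, \<one>\<^bsub>R\<^esub>)"
  "\<zero>\<^bsub>M2 R s\<^esub> = (\<zero>\<^bsub>R\<^esub>, \<zero>\<^bsub>R\<^esub>, \<zero>\<^bsub>R\<^esub>, \<zero>\<^bsub>R\<^esub>)"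
  "(a, b, c, d) \<oplus>\<^bsub>M2 R s\<^esub> (a', b', c', d') =
     (a \<oplus>\<^bsub>R\<^esub> a', b \<oplus>\<^bsub>R\<^esub> b', c \<oplus>\<^bsub>R\<^esub> c', d \<oplus>\<^bsub>R\<^esub> d')"
  by (simp_all add: M2_def M2_mult_def M2_add_def)

lemma M2_entries_closed:
  assumes "U \<in> carrier (M2 R s)"
  shows "e11 U \<in> carrier R" "e12 U \<in> carrier R" "e21 U \<in> carrier R" "e22 U \<in> carrier R"
  using assms by (cases U, simp)+

locale ring_central = ring + fixes s assumes central_s: "central R s"
begin

abbreviation M :: "('a \<times> 'a \<times> 'a \<times> 'a) ring" where "M \<equiv> M2 R s"

lemma s_closed: "s \<in> carrier R"
  using central_s by (simp add: central_def)

lemma s_sq_closed [simp]: "s [^] (2::nat) \<in> carrier R"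
  using s_closed by simp

lemma s_sq_eq: "s [^] (2::nat) = s \<otimes> s"
  using s_closed by (simp add: numeral_2_eq_2)

lemma s_sq_commute:
  assumes x: "x \<in> carrier R"
  shows "s [^] (2::nat) \<otimes> x = x \<otimes> s [^] (2::nat)"
proof -
  have sx: "s \<otimes> x = x \<otimes> s" using central_s x by (simp add: central_def)
  have "s [^] (2::nat) \<otimes> x = s \<otimes> (s \<otimes> x)" using x s_closed by (simp add: s_sq_eq m_assoc)
  also have "\<dots> = (s \<otimes> x) \<otimes> s" using x s_closed by (subst sx) (simp add: m_assoc)
  also have "\<dots> = x \<otimes> s [^] (2::nat)" using x s_closed by (subst sx) (simp add: s_sq_eq m_assoc)
  finally show ?thesis .
qed

lemma s_sq_left_commute:
  "x \<in> carrier R \<Longrightarrow> y \<in> carrier R \<Longrightarrow> x \<otimes> (s [^] (2::nat) \<otimes> y) = s [^] (2::nat) \<otimes> (x \<otimes> y)"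
  by (metis m_assoc s_sq_closed s_sq_commute)

lemma M2_is_ring: "ring M"
proof (rule ringI)
  show "abelian_group M"
  proof (rule abelian_groupI)
    fix U assume "U \<in> carrier M"
    then obtain a b c d where "U = (a, b, c, d)"
      and "a \<in> carrier R" "b \<in> carrier R" "c \<in> carrier R" "d \<in> carrier R"
      by auto
    then show "\<exists>V \<in> carrier M. V \<oplus>\<^bsub>M\<^esub> U = \<zero>\<^bsub>M\<^esub>"
      by (intro bexI[of _ "(\<ominus> a, \<ominus> b, \<ominus> c, \<ominus> d)"]) (auto simp: l_neg)
  qed (auto simp: a_ac)
  show "monoid M"
    by (rule monoidI) (auto simp: m_assoc l_distr r_distr s_sq_left_commute a_ac)
qed (auto simp: m_assoc l_distr r_distr s_sq_left_commute a_ac)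

lemma M2_minus [simp]:
  assumes "a \<in> carrier R" "b \<in> carrier R" "c \<in> carrier R" "d \<in> carrier R"
    and "a' \<in> carrier R" "b' \<in> carrier R" "c' \<in> carrier R" "d' \<in> carrier R"
  shows "(a, b, c, d) \<ominus>\<^bsub>M\<^esub> (a', b', c', d') = (a \<ominus> a', b \<ominus> b', c \<ominus> c', d \<ominus> d')"
proof -
  interpret M: ring M by (rule M2_is_ring)
  have "\<ominus>\<^bsub>M\<^esub> (a', b', c', d') = (\<ominus> a', \<ominus> b', \<ominus> c', \<ominus> d')"
    using assms by (intro M.minus_equality) (auto simp: l_neg)
  with assms show ?thesis by (simp add: M.minus_eq minus_eq)
qed

lemma M2_left_invertible_diag:
  assumes "a \<in> carrier R" "d \<in> carrier R" "left_invertible R a" "left_invertible R d"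
  shows "left_invertible M (a, \<zero>, \<zero>, d)"
proof -
  obtain a' d' where "a' \<in> carrier R" "a' \<otimes> a = \<one>" "d' \<in> carrier R" "d' \<otimes> d = \<one>"
    using assms(3,4) by (auto simp: left_invertible_def)
  with assms(1,2) have "(a', \<zero>, \<zero>, d') \<otimes>\<^bsub>M\<^esub> (a, \<zero>, \<zero>, d) = \<one>\<^bsub>M\<^esub>"
    by simp
  with \<open>a' \<in> carrier R\<close> \<open>d' \<in> carrier R\<close> show ?thesis
    unfolding left_invertible_def by (intro bexI[of _ "(a', \<zero>, \<zero>, d')"]) simp_all
qed

text \<open>Left multiplication cannot move a zero column.\<close>
lemma M2_not_left_invertible_zero_first_column:
  assumes "\<one> \<noteq> \<zero>" "U \<in> carrier M" "e11 U = \<zero>" "e21 U = \<zero>"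
  shows "\<not> left_invertible M U"
  using assms by (cases U) (auto simp: left_invertible_def)

lemma M2_not_left_invertible_zero_second_column:
  assumes "\<one> \<noteq> \<zero>" "U \<in> carrier M" "e12 U = \<zero>" "e22 U = \<zero>"
  shows "\<not> left_invertible M U"
  using assms by (cases U) (auto simp: left_invertible_def)

end

locale local_ring_central = ring_central + ring_local R +
  assumes s_jacobson: "s \<in> jacobson R"
begin

lemma s_sq_mult_jacobson:
  assumes "x \<in> carrier R" "y \<in> carrier R"
  shows "s [^] (2::nat) \<otimes> x \<otimes> y \<in> J"
proof -
  have "s [^] (2::nat) \<in> J"
    using left_ideal_mult[OF jacobson_left_ideal s_closed s_jacobson] by (simp add: s_sq_eq)
  then have "(x \<otimes> y) \<otimes> s [^] (2::nat) \<in> J"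
    by (rule left_ideal_mult[OF jacobson_left_ideal m_closed[OF assms]])
  moreover have "s [^] (2::nat) \<otimes> x \<otimes> y = (x \<otimes> y) \<otimes> s [^] (2::nat)"
    using assms by (simp add: m_assoc s_sq_commute[OF m_closed[OF assms], symmetric])
  ultimately show ?thesis by simp
qed

lemma M2_e11_mult_jacobson_iff:
  assumes "U \<in> carrier M" "V \<in> carrier M"
  shows "e11 (U \<otimes>\<^bsub>M\<^esub> V) \<in> J \<longleftrightarrow> e11 U \<otimes> e11 V \<in> J"
  using assms jacobson_add_iff[OF _ s_sq_mult_jacobson]
  by (cases U, cases V) simp

lemma M2_e22_mult_jacobson_iff:
  assumes "U \<in> carrier M" "V \<in> carrier M"
  shows "e22 (U \<otimes>\<^bsub>M\<^esub> V) \<in> J \<longleftrightarrow> e22 U \<otimes> e22 V \<in> J"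
  using assms jacobson_add_iff[OF _ s_sq_mult_jacobson]
  by (cases U, cases V) (simp add: a_comm)

text \<open>Row operations reduce a matrix with unit diagonal to a diagonal matrix whose
  diagonal entries differ from \<open>\<one>\<close> by multiples of \<open>s\<^sup>2\<close>, hence by elements of the radical.\<close>
lemma M2_left_invertible:
  assumes "U \<in> carrier M" "e11 U \<notin> J" "e22 U \<notin> J"
  shows "left_invertible M U"
proof -
  interpret M: ring M by (rule M2_is_ring)
  obtain u \<beta> \<gamma> v where U: "U = (u, \<beta>, \<gamma>, v)" and
    carr: "u \<in> carrier R" "\<beta> \<in> carrier R" "\<gamma> \<in> carrier R" "v \<in> carrier R"
    using assms(1) by (cases U) auto
  have "u \<notin> J" "v \<notin> J" using assms(2,3) U by simp_all
  then have "left_invertible R u" "left_invertible R v"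
    using left_invertible_if_notin_jacobson carr(1,4) by blast+
  then obtain u' v' where inv: "u' \<in> carrier R" "u' \<otimes> u = \<one>" "v' \<in> carrier R" "v' \<otimes> v = \<one>"
    unfolding left_invertible_def by blast
  define b where "b = u' \<otimes> \<beta>"
  define c where "c = v' \<otimes> \<gamma>"
  have bc: "b \<in> carrier R" "c \<in> carrier R"
    unfolding b_def c_def by (rule m_closed[OF inv(1) carr(2)], rule m_closed[OF inv(3) carr(3)])
  have normalize: "(u', \<zero>, \<zero>, v') \<otimes>\<^bsub>M\<^esub> U = (\<one>, b, c, \<one>)"
    using U carr inv by (simp add: b_def c_def)
  have eliminate: "(\<one>, \<ominus> b, \<ominus> c, \<one>) \<otimes>\<^bsub>M\<^esub> (\<one>, b, c, \<one>) =
      (\<one> \<ominus> s [^] (2::nat) \<otimes> b \<otimes> c, \<zero>, \<zero>, \<one> \<ominus> s [^] (2::nat) \<otimes> c \<otimes> b)"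
    using bc by (simp add: r_minus l_minus minus_eq r_neg l_neg a_comm)
  have "left_invertible M (\<one> \<ominus> s [^] (2::nat) \<otimes> b \<otimes> c, \<zero>, \<zero>, \<one> \<ominus> s [^] (2::nat) \<otimes> c \<otimes> b)"
    using bc s_sq_mult_jacobson one_minus_notin_jacobson left_invertible_if_notin_jacobson
    by (intro M2_left_invertible_diag) simp_all
  then have "left_invertible M (\<one>, b, c, \<one>)"
    using M.left_invertible_factor[of "(\<one>, b, c, \<one>)" "(\<one>, \<ominus> b, \<ominus> c, \<one>)"] bc eliminate
    by simp
  then show ?thesis
    using M.left_invertible_factor[of U "(u', \<zero>, \<zero>, v')"] normalize inv U carr by simp
qed

lemma jacobson_M2_diagonal:
  assumes "A \<in> jacobson M"
  shows "e11 A \<in> J" "e22 A \<in> J"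
proof -
  interpret M: ring M by (rule M2_is_ring)
  have A: "A \<in> carrier M"
    and qr: "\<And>B. B \<in> carrier M \<Longrightarrow> left_invertible M (\<one>\<^bsub>M\<^esub> \<ominus>\<^bsub>M\<^esub> B \<otimes>\<^bsub>M\<^esub> A)"
    using assms M.jacobson_iff_left_quasi_regular[of A] by blast+
  obtain a \<beta> \<gamma> d where A_eq: "A = (a, \<beta>, \<gamma>, d)" and
    carr: "a \<in> carrier R" "\<beta> \<in> carrier R" "\<gamma> \<in> carrier R" "d \<in> carrier R"
    using A by (cases A) auto
  show "e11 A \<in> J"
  proof (rule ccontr)
    assume "e11 A \<notin> J"
    then obtain a' where a': "a' \<in> carrier R" "a' \<otimes> a = \<one>"
      using left_invertible_if_notin_jacobson[OF carr(1)] A_eq by (auto simp: left_invertible_def)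
    have "left_invertible M (\<one>\<^bsub>M\<^esub> \<ominus>\<^bsub>M\<^esub> (a', \<zero>, \<zero>, \<zero>) \<otimes>\<^bsub>M\<^esub> A)"
      using qr a'(1) by simp
    moreover have "\<one>\<^bsub>M\<^esub> \<ominus>\<^bsub>M\<^esub> (a', \<zero>, \<zero>, \<zero>) \<otimes>\<^bsub>M\<^esub> A = (\<zero>, \<ominus> (a' \<otimes> \<beta>), \<zero>, \<one>)"
      using A_eq carr a' by (simp add: minus_eq r_neg)
    ultimately show False
      using M2_not_left_invertible_zero_first_column[OF one_neq_zero] carr a'(1) by simp
  qed
  show "e22 A \<in> J"
  proof (rule ccontr)
    assume "e22 A \<notin> J"
    then obtain d' where d': "d' \<in> carrier R" "d' \<otimes> d = \<one>"
      using left_invertible_if_notin_jacobson[OF carr(4)] A_eq by (auto simp: left_invertible_def)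
    have "left_invertible M (\<one>\<^bsub>M\<^esub> \<ominus>\<^bsub>M\<^esub> (\<zero>, \<zero>, \<zero>, d') \<otimes>\<^bsub>M\<^esub> A)"
      using qr d'(1) by simp
    moreover have "\<one>\<^bsub>M\<^esub> \<ominus>\<^bsub>M\<^esub> (\<zero>, \<zero>, \<zero>, d') \<otimes>\<^bsub>M\<^esub> A = (\<one>, \<zero>, \<ominus> (d' \<otimes> \<gamma>), \<zero>)"
      using A_eq carr d' by (simp add: minus_eq r_neg)
    ultimately show False
      using M2_not_left_invertible_zero_second_column[OF one_neq_zero] carr d'(1) by simp
  qed
qed

lemma diagonal_jacobson_in_jacobson_M2:
  assumes A: "A \<in> carrier M" "e11 A \<in> J" "e22 A \<in> J"
  shows "A \<in> jacobson M"
proof -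
  interpret M: ring M by (rule M2_is_ring)
  have "left_invertible M (\<one>\<^bsub>M\<^esub> \<ominus>\<^bsub>M\<^esub> B \<otimes>\<^bsub>M\<^esub> A)" if B: "B \<in> carrier M" for B
  proof -
    have BA: "B \<otimes>\<^bsub>M\<^esub> A \<in> carrier M" using B A(1) by (rule M.m_closed)
    have "e11 (B \<otimes>\<^bsub>M\<^esub> A) \<in> J"
      using M2_e11_mult_jacobson_iff[OF B A(1)]
        left_ideal_mult[OF jacobson_left_ideal M2_entries_closed(1)[OF B] A(2)] by blast
    moreover have "e22 (B \<otimes>\<^bsub>M\<^esub> A) \<in> J"
      using M2_e22_mult_jacobson_iff[OF B A(1)]
        left_ideal_mult[OF jacobson_left_ideal M2_entries_closed(4)[OF B] A(3)] by blast
    moreover obtain c1 c2 c3 c4 where "B \<otimes>\<^bsub>M\<^esub> A = (c1, c2, c3, c4)"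
      by (cases "B \<otimes>\<^bsub>M\<^esub> A")
    ultimately show ?thesis
      using BA one_minus_notin_jacobson by (intro M2_left_invertible) auto
  qed
  then show ?thesis
    using A(1) M.jacobson_iff_left_quasi_regular[of A] by blast
qed

lemma jacobson_M2: "jacobson M = {A \<in> carrier M. e11 A \<in> J \<and> e22 A \<in> J}"
proof -
  interpret M: ring M by (rule M2_is_ring)
  show ?thesis
    using jacobson_M2_diagonal diagonal_jacobson_in_jacobson_M2 M.jacobson_subset by blast
qed

lemma M2_pow_diagonal_jacobson_iff:
  assumes A: "A \<in> carrier M"
  shows "(e11 (A [^]\<^bsub>M\<^esub> Suc n) \<in> J \<longleftrightarrow> e11 A \<in> J) \<and> (e22 (A [^]\<^bsub>M\<^esub> Suc n) \<in> J \<longleftrightarrow> e22 A \<in> J)"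
proof (induction n)
  case 0
  interpret M: ring M by (rule M2_is_ring)
  have "A [^]\<^bsub>M\<^esub> Suc 0 = A" using M.nat_pow_eone[OF A] by simp
  then show ?case by simp
next
  case (Suc n)
  interpret M: ring M by (rule M2_is_ring)
  have P: "A [^]\<^bsub>M\<^esub> Suc n \<in> carrier M" using A by (rule M.nat_pow_closed)
  have "A [^]\<^bsub>M\<^esub> Suc (Suc n) = A [^]\<^bsub>M\<^esub> Suc n \<otimes>\<^bsub>M\<^esub> A"
    by (rule M.nat_pow_Suc)
  moreover have "e11 (A [^]\<^bsub>M\<^esub> Suc n) \<otimes> e11 A \<in> J \<longleftrightarrow> e11 A \<in> J"
    using mult_jacobson_iff[OF M2_entries_closed(1)[OF P] M2_entries_closed(1)[OF A]] Suc.IH by blast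
  moreover have "e22 (A [^]\<^bsub>M\<^esub> Suc n) \<otimes> e22 A \<in> J \<longleftrightarrow> e22 A \<in> J"
    using mult_jacobson_iff[OF M2_entries_closed(4)[OF P] M2_entries_closed(4)[OF A]] Suc.IH by blast
  ultimately show ?case
    using M2_e11_mult_jacobson_iff[OF P A] M2_e22_mult_jacobson_iff[OF P A] by simp
qed

end

theorem lemma2p6:
  fixes R :: "('a, 'b) ring_scheme" and s :: 'a and A :: "'a * 'a * 'a * 'a"
  assumes "local_ring R"
    and "central R s"
    and "s \<in> jacobson R"
    and "A \<in> carrier (M2 R s)"
  shows "(\<exists>n::nat. n > 0 \<and> A [^]\<^bsub>M2 R s\<^esub> n \<in> jacobson (M2 R s))
         \<longleftrightarrow> A \<in> jacobson (M2 R s)"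
proof -
  have "ring R" using assms(1) by (simp add: local_ring_def)
  then interpret local_ring_central R s
    by (intro local_ring_central.intro ring_central.intro ring_local.intro
        ring_central_axioms.intro ring_local_axioms.intro local_ring_central_axioms.intro
        \<open>ring R\<close> assms(1-3))
  interpret M: ring M by (rule M2_is_ring)
  have "A [^]\<^bsub>M\<^esub> n \<in> jacobson M \<longleftrightarrow> A \<in> jacobson M" if "n > 0" for n :: nat
  proof -
    obtain m where "n = Suc m" using \<open>n > 0\<close> gr0_implies_Suc by blast
    moreover have "A [^]\<^bsub>M\<^esub> n \<in> carrier M" using assms(4) by (rule M.nat_pow_closed)
    ultimately show ?thesis
      using M2_pow_diagonal_jacobson_iff[OF assms(4), of m] assms(4) by (simp add: jacobson_M2)
  qed
  then show ?thesis by auto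
qed

end
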